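(* Let $d\ge2$, $s\ge1$, $n:=ds$, let $U\in\mathcal U(n)$ be Haar-distributed and $B:=\phi_{d,s}(U)$. Then for all $i\ne i'$ and $j\ne j'$ in $\{1,\dots,d\}$: $$\operatorname{Var}(B_{ij})=\frac{(d-1)^2}{d^2(n^2-1)},\qquad \operatorname{Cov}(B_{ij},B_{i'j})=\operatorname{Cov}(B_{ij},B_{ij'})=-\frac{d-1}{d^2(n^2-1)},$$ $$\rho(B_{ij},B_{i'j})=\rho(B_{ij},B_{ij'})=-\frac{1}{d-1},\qquad \operatorname{Cov}(B_{ij},B_{i'j'})=\frac{1}{d^2(n^2-1)},\qquad \rho(B_{ij},B_{i'j'})=\frac{1}{(d-1)^2}.$$
   Context: $\mathcal U(n)$ is the group of $n\times n$ complex unitary matrices with its normalized Haar probability measure. For $U\in\mathcal U(ds)$ viewed as a $d\times d$ block matrix with blocks $U_{ij}\in M_s(\mathbb C)$, $\phi_{d,s}(U)=\big(\tfrac1s\|U_{ij}\|_F^2\big)_{i,j=1}^d$, where $\|X\|_F=\operatorname{Tr}(XX^* )^{1/2}$. $\rho(X,Y)=\operatorname{Cov}(X,Y)/\sqrt{\operatorname{Var}(X)\operatorname{Var}(Y)}$ is Pearson's correlation coefficient. *)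

theory Defs
  imports "HOL-Probability.Probability"
begin

text \<open>Complex square matrices indexed by a finite type 'n (n = CARD('n)).
  For the block structure we take 'n = 'd \<times> 's, so that row index (i,a)
  means block row i, row a inside the block.\<close>

definition conj_transpose :: "complex ^'n ^'n \<Rightarrow> complex ^'n ^'n" where
  "conj_transpose U = (\<chi> i j. cnj (U $ j $ i))"

definition unitary_mat :: "complex ^'n ^'n \<Rightarrow> bool" where
  "unitary_mat U \<longleftrightarrow> conj_transpose U ** U = mat 1 \<and> U ** conj_transpose U = mat 1"

definition haar_unitary :: "(complex ^'n ^'n) measure \<Rightarrow> bool" where
  "haar_unitary M \<longleftrightarrow> prob_space M \<and> sets M = sets borel \<and>
     (AE U in M. unitary_mat U) \<and>
     (\<forall>V. unitary_mat V \<longrightarrow> distr M borel (\<lambda>U. V ** U) = M)"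

definition phi_block :: "complex ^('d::finite \<times> 's::finite) ^('d \<times> 's) \<Rightarrow> 'd \<Rightarrow> 'd \<Rightarrow> real" where
  "phi_block U i j = (1 / real CARD('s)) *
     (\<Sum>a\<in>UNIV. \<Sum>b\<in>UNIV. (cmod (U $ (i, a) $ (j, b)))\<^sup>2)"

definition covariance :: "'a measure \<Rightarrow> ('a \<Rightarrow> real) \<Rightarrow> ('a \<Rightarrow> real) \<Rightarrow> real" where
  "covariance M X Y = (\<integral>x. (X x - (\<integral>y. X y \<partial>M)) * (Y x - (\<integral>y. Y y \<partial>M)) \<partial>M)"

definition variance :: "'a measure \<Rightarrow> ('a \<Rightarrow> real) \<Rightarrow> real" where
  "variance M X = covariance M X X"

definition pearson :: "'a measure \<Rightarrow> ('a \<Rightarrow> real) \<Rightarrow> ('a \<Rightarrow> real) \<Rightarrow> real" where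
  "pearson M X Y = covariance M X Y / sqrt (variance M X * variance M Y)"

end

theory Submission
  imports Defs
begin

(* Left multiplication by permutation
   matrices shows that a joint moment of entries depends only on the pattern of coinciding
   row indices. For distinct rows a, b and columns c, d, the moments
   g = E |U_ac|^2 |U_ad|^2, h = E |U_ac|^2 |U_bd|^2 and e = E Re (U_ac cnj U_ad cnj U_bc U_bd)
   satisfy three linear relations: the unit norm of column d gives g + (n - 1) h = 1/n;
   invariance under the unitaries with rows (e_a + z e_b)/sqrt 2 and (e_a - z e_b)/sqrt 2,
   averaged over z^4 = 1, gives g = h + e; finally e = h if c = d, while orthogonality of
   columns c and d gives g + (n - 1) e = 0 if c <> d. Solving them,
     E |U_ac|^2 |U_bd|^2 = 1/n^2 + (n [a = b] - 1) (n [c = d] - 1) / (n^2 (n^2 - 1)),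
   and summing over the s^2 x s^2 entries of two blocks,
     Cov (B_ij, B_i'j') = (d [i = i'] - 1) (d [j = j'] - 1) / (d^2 (n^2 - 1)). *)

section \<open>Unitary matrices\<close>

lemma unitary_mat_iff_right_inverse:
  "unitary_mat U \<longleftrightarrow> U ** conj_transpose U = mat 1"
  unfolding unitary_mat_def using matrix_left_right_inverse by blast

lemma unitary_mat_column_inner:
  assumes "unitary_mat U"
  shows "(\<Sum>k\<in>UNIV. U $ k $ c * cnj (U $ k $ c')) = (if c = c' then 1 else 0)"
proof -
  have "(conj_transpose U ** U) $ c' $ c = (if c = c' then 1 else 0)"
    using assms by (simp add: unitary_mat_def mat_def)
  then show ?thesis
    by (simp add: matrix_matrix_mult_def conj_transpose_def mult.commute)
qed

lemma unitary_mat_column_norm: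
  assumes "unitary_mat U"
  shows "(\<Sum>k\<in>UNIV. (cmod (U $ k $ c))\<^sup>2) = 1"
proof -
  have "complex_of_real (\<Sum>k\<in>UNIV. (cmod (U $ k $ c))\<^sup>2) = (\<Sum>k\<in>UNIV. U $ k $ c * cnj (U $ k $ c))"
    by (simp only: of_real_sum complex_norm_square)
  also have "\<dots> = 1"
    using unitary_mat_column_inner[OF assms] by simp
  finally show ?thesis
    by (simp only: of_real_eq_1_iff)
qed

lemma unitary_mat_entry_le_1:
  assumes "unitary_mat U"
  shows "cmod (U $ a $ c) \<le> 1"
proof -
  have "(cmod (U $ a $ c))\<^sup>2 \<le> (\<Sum>k\<in>UNIV. (cmod (U $ k $ c))\<^sup>2)"
    by (rule member_le_sum) auto
  then show ?thesis
    using unitary_mat_column_norm[OF assms] by (simp add: power_le_one_iff)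
qed

definition perm_mat :: "('n \<Rightarrow> 'n) \<Rightarrow> complex^'n^'n" where
  "perm_mat \<sigma> = (\<chi> i k. of_bool (k = \<sigma> i))"

lemma perm_mat_mult_row [simp]: "(perm_mat \<sigma> ** U) $ i = U $ \<sigma> i"
  by (simp add: perm_mat_def matrix_matrix_mult_def vec_eq_iff)

lemma unitary_perm_mat:
  assumes "inj \<sigma>"
  shows "unitary_mat (perm_mat \<sigma>)"
proof -
  have "(perm_mat \<sigma> ** conj_transpose (perm_mat \<sigma>)) $ i $ j = mat 1 $ i $ j" for i j
    using assms by (simp only: perm_mat_mult_row) (simp add: conj_transpose_def perm_mat_def mat_def inj_eq)
  then show ?thesis
    by (simp add: unitary_mat_iff_right_inverse vec_eq_iff)
qed

definition mixing_mat :: "'n \<Rightarrow> 'n \<Rightarrow> complex \<Rightarrow> complex^'n^'n" where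
  "mixing_mat a b z = (\<chi> i k.
     if i = a then (if k = a then 1 else if k = b then z else 0) / of_real (sqrt 2)
     else if i = b then (if k = a then 1 else if k = b then - z else 0) / of_real (sqrt 2)
     else if k = i then 1 else 0)"

lemma mixing_mat_mult_row:
  assumes "a \<noteq> b"
  shows "(mixing_mat a b z ** U) $ a $ k = (U $ a $ k + z * U $ b $ k) / of_real (sqrt 2)"
proof -
  have "(mixing_mat a b z ** U) $ a $ k = (\<Sum>j\<in>{a, b}. mixing_mat a b z $ a $ j * U $ j $ k)"
    unfolding matrix_matrix_mult_def
    by (simp, rule sum.mono_neutral_right) (auto simp: mixing_mat_def)
  then show ?thesis
    using assms by (simp add: mixing_mat_def add_divide_distrib)
qed

lemma unitary_mixing_mat:
  assumes ab: "a \<noteq> b" and z: "cmod z = 1"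
  shows "unitary_mat (mixing_mat a b z)"
proof -
  let ?R = "mixing_mat a b z"
  have zz: "z * cnj z = 1"
    using z by (simp flip: complex_norm_square)
  have r2: "complex_of_real (sqrt 2) * complex_of_real (sqrt 2) = 2"
    by (simp flip: of_real_mult)
  have outside: "?R $ i $ k = (if k = i then 1 else 0)" if "k \<notin> {a, b}" for i k
    using that by (auto simp: mixing_mat_def)
  have "(?R ** conj_transpose ?R) $ i $ j = mat 1 $ i $ j" for i j
  proof -
    have "(?R ** conj_transpose ?R) $ i $ j = (\<Sum>k\<in>UNIV. ?R $ i $ k * cnj (?R $ j $ k))"
      by (simp add: matrix_matrix_mult_def conj_transpose_def)
    also have "\<dots> = (\<Sum>k\<in>UNIV - {a, b}. ?R $ i $ k * cnj (?R $ j $ k))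
        + (\<Sum>k\<in>{a, b}. ?R $ i $ k * cnj (?R $ j $ k))"
      by (rule sum.subset_diff) auto
    also have "(\<Sum>k\<in>UNIV - {a, b}. ?R $ i $ k * cnj (?R $ j $ k))
        = (\<Sum>k\<in>UNIV - {a, b}. if k = i then of_bool (i = j) else 0)"
      by (rule sum.cong) (auto simp: outside)
    also have "\<dots> = of_bool (i = j \<and> i \<notin> {a, b})"
      by (simp add: sum.delta)
    also have "(\<Sum>k\<in>{a, b}. ?R $ i $ k * cnj (?R $ j $ k)) = of_bool (i = j \<and> i \<in> {a, b})"
      using ab by (auto simp: mixing_mat_def zz r2 field_simps)
    finally show ?thesis
      by (auto simp: mat_def)
  qed
  then show ?thesis
    by (simp add: unitary_mat_iff_right_inverse vec_eq_iff)
qed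

section \<open>Haar measure\<close>

lemma continuous_on_matrix_mult_left:
  fixes V :: "complex^'n^'m"
  shows "continuous_on UNIV (\<lambda>U::complex^'k^'n. V ** U)"
  unfolding matrix_matrix_mult_def by (intro continuous_intros)

lemma exists_inj_map_pair:
  assumes "a \<noteq> b" "a' \<noteq> b'"
  obtains \<sigma> :: "'a \<Rightarrow> 'a" where "inj \<sigma>" "\<sigma> a = a'" "\<sigma> b = b'"
proof
  let ?\<tau> = "Transposition.transpose a a'"
  let ?\<sigma> = "Transposition.transpose (?\<tau> b) b' \<circ> ?\<tau>"
  show "inj ?\<sigma>"
    by (simp add: inj_compose inj_transpose)
  have "?\<tau> b \<noteq> a'"
    using assms(1) by (auto simp: Transposition.transpose_def)
  then show "?\<sigma> a = a'"
    using assms(2) by simp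
  show "?\<sigma> b = b'"
    by simp
qed

context
  fixes M :: "(complex^'n^'n) measure"
  assumes haar: "haar_unitary M"
begin

lemma haar_prob_space: "prob_space M"
  using haar unfolding haar_unitary_def by blast

lemma haar_AE_unitary: "AE U in M. unitary_mat U"
  using haar unfolding haar_unitary_def by blast

lemma haar_distr_left_mult: "unitary_mat V \<Longrightarrow> distr M borel (\<lambda>U. V ** U) = M"
  using haar unfolding haar_unitary_def by blast

lemma haar_measurable_continuous:
  assumes "continuous_on UNIV f"
  shows "f \<in> borel_measurable M"
proof -
  have "sets M = sets borel"
    using haar unfolding haar_unitary_def by blast
  show ?thesis
    unfolding measurable_cong_sets[OF \<open>sets M = sets borel\<close> refl]
    by (rule borel_measurable_continuous_onI[OF assms])
qed

lemma haar_integral_left_mult: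
  fixes f :: "complex^'n^'n \<Rightarrow> 'b::{banach, second_countable_topology}"
  assumes V: "unitary_mat V" and f: "continuous_on UNIV f"
  shows "(\<integral>U. f (V ** U) \<partial>M) = (\<integral>U. f U \<partial>M)"
proof -
  have "(\<integral>U. f U \<partial>M) = (\<integral>U. f U \<partial>distr M borel (\<lambda>U. V ** U))"
    by (simp only: haar_distr_left_mult[OF V])
  also have "\<dots> = (\<integral>U. f (V ** U) \<partial>M)"
    by (intro integral_distr haar_measurable_continuous borel_measurable_continuous_onI f
        continuous_on_matrix_mult_left)
  finally show ?thesis ..
qed

lemma haar_integrable_left_mult:
  fixes f :: "complex^'n^'n \<Rightarrow> 'b::{banach, second_countable_topology}"
  assumes V: "unitary_mat V" and f: "continuous_on UNIV f" and "integrable M f"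
  shows "integrable M (\<lambda>U. f (V ** U))"
proof -
  have "integrable (distr M borel (\<lambda>U. V ** U)) f"
    using assms(3) by (simp only: haar_distr_left_mult[OF V])
  then show ?thesis
    by (subst (asm) integrable_distr_eq)
       (intro haar_measurable_continuous borel_measurable_continuous_onI f
         continuous_on_matrix_mult_left)+
qed

lemma haar_integrable_bounded:
  fixes f :: "complex^'n^'n \<Rightarrow> 'b::{banach, second_countable_topology}"
  assumes f: "continuous_on UNIV f" and bound: "\<And>U. unitary_mat U \<Longrightarrow> norm (f U) \<le> B"
  shows "integrable M f"
proof -
  interpret prob_space M by (rule haar_prob_space)
  have "AE U in M. norm (f U) \<le> B"
    using haar_AE_unitary by (rule AE_mp) (simp add: bound)
  then show ?thesis
    by (intro integrable_const_bound haar_measurable_continuous f)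
qed

lemma haar_integral_cong_unitary:
  fixes f g :: "complex^'n^'n \<Rightarrow> 'b::{banach, second_countable_topology}"
  assumes "continuous_on UNIV f" "continuous_on UNIV g" and "\<And>U. unitary_mat U \<Longrightarrow> f U = g U"
  shows "(\<integral>U. f U \<partial>M) = (\<integral>U. g U \<partial>M)"
proof (rule integral_cong_AE)
  show "AE U in M. f U = g U"
    using haar_AE_unitary by (rule AE_mp) (simp add: assms(3))
qed (intro haar_measurable_continuous assms)+

lemma haar_integral_row_invariant:
  fixes f :: "complex^'n \<Rightarrow> 'b::{banach, second_countable_topology}"
  assumes f: "continuous_on UNIV f"
  shows "(\<integral>U. f (U $ a) \<partial>M) = (\<integral>U. f (U $ a') \<partial>M)"
proof -
  have cont: "continuous_on UNIV (\<lambda>U::complex^'n^'n. f (U $ a))"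
    by (rule continuous_on_compose2[OF f]) (auto intro: continuous_intros)
  have "(\<integral>U. f (U $ a') \<partial>M) = (\<integral>U. f ((perm_mat (Transposition.transpose a a') ** U) $ a) \<partial>M)"
    by simp
  also have "\<dots> = (\<integral>U. f (U $ a) \<partial>M)"
    by (rule haar_integral_left_mult[OF unitary_perm_mat[OF inj_transpose] cont])
  finally show ?thesis ..
qed

lemma haar_integral_row_pair_invariant:
  fixes f :: "complex^'n \<Rightarrow> complex^'n \<Rightarrow> 'b::{banach, second_countable_topology}"
  assumes f: "continuous_on UNIV (\<lambda>x. f (fst x) (snd x))" and "a \<noteq> b" "a' \<noteq> b'"
  shows "(\<integral>U. f (U $ a) (U $ b) \<partial>M) = (\<integral>U. f (U $ a') (U $ b') \<partial>M)"
proof -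
  obtain \<sigma> where \<sigma>: "inj \<sigma>" "\<sigma> a = a'" "\<sigma> b = b'"
    using exists_inj_map_pair[OF assms(2,3)] .
  have "continuous_on UNIV (\<lambda>U::complex^'n^'n. (U $ a, U $ b))"
    by (intro continuous_intros)
  then have cont: "continuous_on UNIV (\<lambda>U::complex^'n^'n. f (U $ a) (U $ b))"
    using continuous_on_compose2[OF f] by fastforce
  have "(\<integral>U. f (U $ a') (U $ b') \<partial>M) = (\<integral>U. f ((perm_mat \<sigma> ** U) $ a) ((perm_mat \<sigma> ** U) $ b) \<partial>M)"
    by (simp add: \<sigma>)
  also have "\<dots> = (\<integral>U. f (U $ a) (U $ b) \<partial>M)"
    by (rule haar_integral_left_mult[OF unitary_perm_mat[OF \<sigma>(1)] cont])
  finally show ?thesis ..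
qed

end

section \<open>Fourth moments of the entries\<close>

lemma sum_UNIV_except_const:
  fixes f :: "'a::finite \<Rightarrow> 'b::ring_1"
  assumes "\<And>x. x \<noteq> a \<Longrightarrow> f x = c"
  shows "sum f UNIV = f a + (of_nat CARD('a) - 1) * c"
proof -
  have "sum f UNIV = f a + sum f (UNIV - {a})"
    by (rule sum.remove) auto
  also have "sum f (UNIV - {a}) = (\<Sum>x\<in>UNIV - {a}. c)"
    using assms by (intro sum.cong) auto
  also have "(\<Sum>x\<in>UNIV - {a}. c) = (of_nat CARD('a) - 1) * c"
    by (simp add: card_Diff_singleton of_nat_diff Suc_le_eq)
  finally show ?thesis .
qed

definition entry_cross :: "'n \<Rightarrow> 'n \<Rightarrow> 'n \<Rightarrow> 'n \<Rightarrow> complex^'n^'n \<Rightarrow> real" where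
  "entry_cross a b c d U = Re (U $ a $ c * cnj (U $ a $ d) * cnj (U $ b $ c) * U $ b $ d)"

lemma continuous_on_entry_cross [continuous_intros]: "continuous_on S (entry_cross a b c d)"
  unfolding entry_cross_def by (intro continuous_intros)

lemma entry_cross_same_row: "entry_cross a a c d U = (cmod (U $ a $ c))\<^sup>2 * (cmod (U $ a $ d))\<^sup>2"
proof -
  have "U $ a $ c * cnj (U $ a $ d) * cnj (U $ a $ c) * U $ a $ d
      = complex_of_real ((cmod (U $ a $ c))\<^sup>2 * (cmod (U $ a $ d))\<^sup>2)"
    by (simp only: of_real_mult complex_norm_square) (simp add: mult_ac)
  then show ?thesis
    by (simp add: entry_cross_def)
qed

lemma entry_cross_same_column: "entry_cross a b c c U = (cmod (U $ a $ c))\<^sup>2 * (cmod (U $ b $ c))\<^sup>2"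
proof -
  have "U $ a $ c * cnj (U $ a $ c) * cnj (U $ b $ c) * U $ b $ c
      = complex_of_real ((cmod (U $ a $ c))\<^sup>2 * (cmod (U $ b $ c))\<^sup>2)"
    by (simp only: of_real_mult complex_norm_square) (simp add: mult_ac)
  then show ?thesis
    by (simp add: entry_cross_def)
qed

lemma sum_fourth_roots_cmod_sq_mult:
  fixes x y u v :: complex
  shows "(\<Sum>z\<in>{1, \<i>, -1, -\<i>}. (cmod (x + z * y))\<^sup>2 * (cmod (u + z * v))\<^sup>2)
    = 4 * ((cmod x)\<^sup>2 * (cmod u)\<^sup>2 + (cmod y)\<^sup>2 * (cmod v)\<^sup>2 + (cmod x)\<^sup>2 * (cmod v)\<^sup>2
       + (cmod y)\<^sup>2 * (cmod u)\<^sup>2 + 2 * Re (x * cnj u * cnj y * v))"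
  unfolding cmod_power2 by (simp add: complex_eq_iff algebra_simps power2_eq_square)

lemma mixing_mat_fourth_roots_sum:
  assumes ab: "a \<noteq> b"
  shows "(\<Sum>z\<in>{1, \<i>, -1, -\<i>}.
      (cmod ((mixing_mat a b z ** U) $ a $ c))\<^sup>2 * (cmod ((mixing_mat a b z ** U) $ a $ d))\<^sup>2)
    = (cmod (U $ a $ c))\<^sup>2 * (cmod (U $ a $ d))\<^sup>2 + (cmod (U $ b $ c))\<^sup>2 * (cmod (U $ b $ d))\<^sup>2
      + (cmod (U $ a $ c))\<^sup>2 * (cmod (U $ b $ d))\<^sup>2 + (cmod (U $ b $ c))\<^sup>2 * (cmod (U $ a $ d))\<^sup>2
      + 2 * entry_cross a b c d U"
proof -
  have pointwise: "(cmod ((mixing_mat a b z ** U) $ a $ c))\<^sup>2 * (cmod ((mixing_mat a b z ** U) $ a $ d))\<^sup>2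
      = (cmod (U $ a $ c + z * U $ b $ c))\<^sup>2 * (cmod (U $ a $ d + z * U $ b $ d))\<^sup>2 / 4" for z
    by (simp add: mixing_mat_mult_row[OF ab] norm_divide power_divide)
  show ?thesis
    by (simp only: pointwise sum_divide_distrib[symmetric] sum_fourth_roots_cmod_sq_mult
        entry_cross_def[symmetric]) simp
qed

lemma unitary_mat_entry_cross_sum:
  assumes "unitary_mat U" "c \<noteq> d"
  shows "(\<Sum>k\<in>UNIV. \<Sum>l\<in>UNIV. entry_cross k l c d U) = 0"
proof -
  define S where "S = (\<Sum>k\<in>UNIV. U $ k $ c * cnj (U $ k $ d))"
  have "S = 0"
    unfolding S_def using unitary_mat_column_inner[OF assms(1)] assms(2) by simp
  moreover have "(\<Sum>k\<in>UNIV. \<Sum>l\<in>UNIV. entry_cross k l c d U) = Re (S * cnj S)"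
    unfolding S_def cnj_sum sum_product Re_sum entry_cross_def by (simp add: mult.assoc mult.left_commute)
  ultimately show ?thesis
    by simp
qed

context
  fixes M :: "(complex^'n^'n) measure"
  assumes haar: "haar_unitary M"
begin

lemma haar_integrable_sq_entry: "integrable M (\<lambda>U. (cmod (U $ a $ c))\<^sup>2)"
  by (rule haar_integrable_bounded[OF haar, where B=1])
     (intro continuous_intros, auto intro!: power_le_one simp: unitary_mat_entry_le_1)

lemma haar_integrable_sq_entry_mult: "integrable M (\<lambda>U. (cmod (U $ a $ c))\<^sup>2 * (cmod (U $ b $ d))\<^sup>2)"
  by (rule haar_integrable_bounded[OF haar, where B=1])
     (intro continuous_intros, auto intro!: power_le_one mult_le_one simp: unitary_mat_entry_le_1)

lemma haar_integrable_entry_cross: "integrable M (entry_cross a b c d)"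
proof (rule haar_integrable_bounded[OF haar, where B=1])
  fix U :: "complex^'n^'n"
  assume U: "unitary_mat U"
  have "norm (entry_cross a b c d U) \<le> cmod (U $ a $ c * cnj (U $ a $ d) * cnj (U $ b $ c) * U $ b $ d)"
    unfolding entry_cross_def real_norm_def by (rule abs_Re_le_cmod)
  also have "\<dots> = cmod (U $ a $ c) * cmod (U $ a $ d) * cmod (U $ b $ c) * cmod (U $ b $ d)"
    by (simp add: norm_mult)
  also have "\<dots> \<le> 1"
    using unitary_mat_entry_le_1[OF U] by (intro mult_le_one) auto
  finally show "norm (entry_cross a b c d U) \<le> 1" .
qed (intro continuous_intros)

lemma haar_integral_sq_entry: "(\<integral>U. (cmod (U $ a $ c))\<^sup>2 \<partial>M) = 1 / real CARD('n)"
proof -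
  interpret prob_space M by (rule haar_prob_space[OF haar])
  have row: "(\<integral>U. (cmod (U $ k $ c))\<^sup>2 \<partial>M) = (\<integral>U. (cmod (U $ a $ c))\<^sup>2 \<partial>M)" for k
    by (rule haar_integral_row_invariant[OF haar, where f="\<lambda>x. (cmod (x $ c))\<^sup>2"])
       (intro continuous_intros)
  have "real CARD('n) * (\<integral>U. (cmod (U $ a $ c))\<^sup>2 \<partial>M)
      = (\<Sum>k\<in>(UNIV::'n set). \<integral>U. (cmod (U $ a $ c))\<^sup>2 \<partial>M)"
    by simp
  also have "\<dots> = (\<Sum>k\<in>UNIV. \<integral>U. (cmod (U $ k $ c))\<^sup>2 \<partial>M)"
    by (rule sum.cong[OF refl row[symmetric]])
  also have "\<dots> = (\<integral>U. (\<Sum>k\<in>UNIV. (cmod (U $ k $ c))\<^sup>2) \<partial>M)"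
    by (simp add: haar_integrable_sq_entry)
  also have "\<dots> = (\<integral>U. 1 \<partial>M)"
    by (intro haar_integral_cong_unitary[OF haar] continuous_intros unitary_mat_column_norm)
  finally show ?thesis
    by (simp add: prob_space field_simps)
qed

lemma haar_moment_column_norm:
  assumes "a \<noteq> b"
  shows "(\<integral>U. (cmod (U $ a $ c))\<^sup>2 * (cmod (U $ a $ d))\<^sup>2 \<partial>M)
      + (real CARD('n) - 1) * (\<integral>U. (cmod (U $ a $ c))\<^sup>2 * (cmod (U $ b $ d))\<^sup>2 \<partial>M)
    = 1 / real CARD('n)"
proof -
  have pair: "(\<integral>U. (cmod (U $ a $ c))\<^sup>2 * (cmod (U $ k $ d))\<^sup>2 \<partial>M)
      = (\<integral>U. (cmod (U $ a $ c))\<^sup>2 * (cmod (U $ b $ d))\<^sup>2 \<partial>M)" if "k \<noteq> a" for k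
    by (rule haar_integral_row_pair_invariant[OF haar,
          where f="\<lambda>x y. (cmod (x $ c))\<^sup>2 * (cmod (y $ d))\<^sup>2", OF _ that[symmetric] assms])
       (intro continuous_intros)
  have "(\<Sum>k\<in>UNIV. \<integral>U. (cmod (U $ a $ c))\<^sup>2 * (cmod (U $ k $ d))\<^sup>2 \<partial>M)
      = (\<integral>U. (cmod (U $ a $ c))\<^sup>2 * (\<Sum>k\<in>UNIV. (cmod (U $ k $ d))\<^sup>2) \<partial>M)"
    by (simp add: haar_integrable_sq_entry_mult sum_distrib_left)
  also have "\<dots> = (\<integral>U. (cmod (U $ a $ c))\<^sup>2 \<partial>M)"
    by (intro haar_integral_cong_unitary[OF haar] continuous_intros)
       (simp add: unitary_mat_column_norm)
  also have "\<dots> = 1 / real CARD('n)"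
    by (rule haar_integral_sq_entry)
  finally show ?thesis
    by (subst (asm) sum_UNIV_except_const[where a=a, OF pair]) simp_all
qed

lemma haar_moment_mixing:
  assumes ab: "a \<noteq> b"
  shows "(\<integral>U. (cmod (U $ a $ c))\<^sup>2 * (cmod (U $ a $ d))\<^sup>2 \<partial>M)
    = (\<integral>U. (cmod (U $ a $ c))\<^sup>2 * (cmod (U $ b $ d))\<^sup>2 \<partial>M)
      + (\<integral>U. entry_cross a b c d U \<partial>M)"
proof -
  define F where "F = (\<lambda>U::complex^'n^'n. (cmod (U $ a $ c))\<^sup>2 * (cmod (U $ a $ d))\<^sup>2)"
  define Z where "Z = {1, \<i>, -1, -\<i> :: complex}"
  have F_cont: "continuous_on UNIV F"
    unfolding F_def by (intro continuous_intros)
  have F_int: "integrable M F"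
    unfolding F_def by (rule haar_integrable_sq_entry_mult)
  have unitary: "unitary_mat (mixing_mat a b z)" if "z \<in> Z" for z
    using that by (auto simp: Z_def intro: unitary_mixing_mat[OF ab])
  have "card Z = 4"
    by (simp add: Z_def complex_eq_iff)
  then have "4 * (\<integral>U. F U \<partial>M) = (\<Sum>z\<in>Z. \<integral>U. F (mixing_mat a b z ** U) \<partial>M)"
    by (simp add: haar_integral_left_mult[OF haar unitary F_cont])
  also have "\<dots> = (\<integral>U. (\<Sum>z\<in>Z. F (mixing_mat a b z ** U)) \<partial>M)"
    by (rule Bochner_Integration.integral_sum[symmetric])
       (rule haar_integrable_left_mult[OF haar unitary F_cont F_int])
  also have "\<dots> = (\<integral>U. (cmod (U $ a $ c))\<^sup>2 * (cmod (U $ a $ d))\<^sup>2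
      + (cmod (U $ b $ c))\<^sup>2 * (cmod (U $ b $ d))\<^sup>2 + (cmod (U $ a $ c))\<^sup>2 * (cmod (U $ b $ d))\<^sup>2
      + (cmod (U $ b $ c))\<^sup>2 * (cmod (U $ a $ d))\<^sup>2 + 2 * entry_cross a b c d U \<partial>M)"
    unfolding F_def Z_def by (simp only: mixing_mat_fourth_roots_sum[OF ab])
  also have "\<dots> = (\<integral>U. (cmod (U $ a $ c))\<^sup>2 * (cmod (U $ a $ d))\<^sup>2 \<partial>M)
      + (\<integral>U. (cmod (U $ b $ c))\<^sup>2 * (cmod (U $ b $ d))\<^sup>2 \<partial>M)
      + (\<integral>U. (cmod (U $ a $ c))\<^sup>2 * (cmod (U $ b $ d))\<^sup>2 \<partial>M)
      + (\<integral>U. (cmod (U $ b $ c))\<^sup>2 * (cmod (U $ a $ d))\<^sup>2 \<partial>M)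
      + 2 * (\<integral>U. entry_cross a b c d U \<partial>M)"
    by (simp add: haar_integrable_sq_entry_mult haar_integrable_entry_cross)
  finally have "4 * (\<integral>U. (cmod (U $ a $ c))\<^sup>2 * (cmod (U $ a $ d))\<^sup>2 \<partial>M) = \<dots>"
    by (simp only: F_def)
  moreover have "(\<integral>U. (cmod (U $ b $ c))\<^sup>2 * (cmod (U $ b $ d))\<^sup>2 \<partial>M)
      = (\<integral>U. (cmod (U $ a $ c))\<^sup>2 * (cmod (U $ a $ d))\<^sup>2 \<partial>M)"
    by (rule haar_integral_row_invariant[OF haar, where f="\<lambda>x. (cmod (x $ c))\<^sup>2 * (cmod (x $ d))\<^sup>2"])
       (intro continuous_intros)
  moreover have "(\<integral>U. (cmod (U $ b $ c))\<^sup>2 * (cmod (U $ a $ d))\<^sup>2 \<partial>M)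
      = (\<integral>U. (cmod (U $ a $ c))\<^sup>2 * (cmod (U $ b $ d))\<^sup>2 \<partial>M)"
    by (rule haar_integral_row_pair_invariant[OF haar,
          where f="\<lambda>x y. (cmod (x $ c))\<^sup>2 * (cmod (y $ d))\<^sup>2", OF _ ab[symmetric] ab])
       (intro continuous_intros)
  ultimately show ?thesis
    by linarith
qed

lemma haar_moment_orthogonality:
  assumes ab: "a \<noteq> b" and cd: "c \<noteq> d"
  shows "(\<integral>U. (cmod (U $ a $ c))\<^sup>2 * (cmod (U $ a $ d))\<^sup>2 \<partial>M)
      + (real CARD('n) - 1) * (\<integral>U. entry_cross a b c d U \<partial>M) = 0"
    (is "?g + (real CARD('n) - 1) * ?e = 0")
proof -
  have diag: "(\<integral>U. entry_cross k k c d U \<partial>M) = ?g" for k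
    unfolding entry_cross_same_row
    by (rule haar_integral_row_invariant[OF haar, where f="\<lambda>x. (cmod (x $ c))\<^sup>2 * (cmod (x $ d))\<^sup>2"])
       (intro continuous_intros)
  have off_diag: "(\<integral>U. entry_cross k l c d U \<partial>M) = ?e" if "l \<noteq> k" for k l
    unfolding entry_cross_def
    by (rule haar_integral_row_pair_invariant[OF haar,
          where f="\<lambda>x y. Re (x $ c * cnj (x $ d) * cnj (y $ c) * y $ d)", OF _ that[symmetric] ab])
       (intro continuous_intros)
  have row_sum: "(\<Sum>l\<in>UNIV. \<integral>U. entry_cross k l c d U \<partial>M) = ?g + (real CARD('n) - 1) * ?e" for k
    using sum_UNIV_except_const[where a=k, OF off_diag] by (simp add: diag)
  have "real CARD('n) * (?g + (real CARD('n) - 1) * ?e)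
      = (\<Sum>k\<in>UNIV. \<Sum>l\<in>UNIV. \<integral>U. entry_cross k l c d U \<partial>M)"
    by (simp add: row_sum)
  also have "\<dots> = (\<integral>U. (\<Sum>k\<in>UNIV. \<Sum>l\<in>UNIV. entry_cross k l c d U) \<partial>M)"
    by (simp add: haar_integrable_entry_cross)
  also have "\<dots> = (\<integral>U. 0 \<partial>M)"
    by (intro haar_integral_cong_unitary[OF haar] continuous_intros unitary_mat_entry_cross_sum cd)
  finally show ?thesis
    by simp
qed

end

lemma fourth_moment_equations_difference:
  fixes N g h e :: real and same_col :: bool
  assumes N2: "N \<ge> 2"
    and norm: "N * g + N * (N - 1) * h = 1" and mix: "e = g - h"
    and col: "if same_col then e = h else g + (N - 1) * e = 0"
  shows "g - h = N * ((N * of_bool same_col - 1) / (N\<^sup>2 * (N\<^sup>2 - 1)))"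
proof -
  have nz: "N \<noteq> 0" "N + 1 \<noteq> 0" "N - 1 \<noteq> 0"
    using N2 by auto
  show ?thesis
  proof (cases same_col)
    case True
    have sq: "N\<^sup>2 * (N\<^sup>2 - 1) = N * (N + 1) * (N * (N - 1))"
      by (simp add: algebra_simps power2_eq_square)
    from True col mix have "g = 2 * h"
      by simp
    with norm have "N * (N + 1) * h = 1"
      by (simp add: algebra_simps)
    then have "h = 1 / (N * (N + 1))"
      using nz by (simp add: eq_divide_eq mult_ac)
    with \<open>g = 2 * h\<close> have "g - h = 1 / (N * (N + 1))"
      by simp
    also have "\<dots> = N * ((N * of_bool same_col - 1) / (N\<^sup>2 * (N\<^sup>2 - 1)))"
      using True nz by (simp add: sq)
    finally show ?thesis .
  next
    case False
    have sq: "N\<^sup>2 * (N\<^sup>2 - 1) = N * (N * (N + 1) * (N - 1))"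
      by (simp add: algebra_simps power2_eq_square)
    from False col mix have "N * g = (N - 1) * h"
      by (simp add: algebra_simps)
    with norm have "N * (N + 1) * g = 1"
      by algebra
    then have g: "g = 1 / (N * (N + 1))"
      using nz by (simp add: eq_divide_eq mult_ac)
    have "(N - 1) * (g - h) = - g"
      using \<open>N * g = (N - 1) * h\<close> by (simp add: algebra_simps)
    then have "g - h = - g / (N - 1)"
      using nz by (simp add: field_simps)
    also have "\<dots> = - 1 / (N * (N + 1) * (N - 1))"
      by (simp add: g)
    also have "\<dots> = N * ((N * of_bool same_col - 1) / (N\<^sup>2 * (N\<^sup>2 - 1)))"
      using False nz by (simp add: sq)
    finally show ?thesis .
  qed
qed

lemma fourth_moment_equations_solution:
  fixes N g h e :: real and same_col :: bool
  assumes N2: "N \<ge> 2"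
    and norm: "N * g + N * (N - 1) * h = 1" and mix: "e = g - h"
    and col: "if same_col then e = h else g + (N - 1) * e = 0"
  defines "k \<equiv> (N * of_bool same_col - 1) / (N\<^sup>2 * (N\<^sup>2 - 1))"
  shows "g = 1 / N\<^sup>2 + (N - 1) * k" and "h = 1 / N\<^sup>2 - k"
proof -
  have diff: "g - h = N * k"
    unfolding k_def by (rule fourth_moment_equations_difference[OF N2 norm mix col])
  have "N \<noteq> 0"
    using N2 by auto
  with norm diff show "h = 1 / N\<^sup>2 - k"
    by (simp add: field_simps power2_eq_square)
  with diff show "g = 1 / N\<^sup>2 + (N - 1) * k"
    by (simp add: algebra_simps)
qed

context
  fixes M :: "(complex^'n^'n) measure"
  assumes haar: "haar_unitary M"
begin

lemma haar_fourth_moments_two_rows: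
  assumes ab: "a \<noteq> b"
  defines "N \<equiv> real CARD('n)"
  shows "(\<integral>U. (cmod (U $ a $ c))\<^sup>2 * (cmod (U $ a $ d))\<^sup>2 \<partial>M)
      = 1 / N\<^sup>2 + (N - 1) * ((N * of_bool (c = d) - 1) / (N\<^sup>2 * (N\<^sup>2 - 1)))"
    and "(\<integral>U. (cmod (U $ a $ c))\<^sup>2 * (cmod (U $ b $ d))\<^sup>2 \<partial>M)
      = 1 / N\<^sup>2 - (N * of_bool (c = d) - 1) / (N\<^sup>2 * (N\<^sup>2 - 1))"
proof -
  define g where "g = (\<integral>U. (cmod (U $ a $ c))\<^sup>2 * (cmod (U $ a $ d))\<^sup>2 \<partial>M)"
  define h where "h = (\<integral>U. (cmod (U $ a $ c))\<^sup>2 * (cmod (U $ b $ d))\<^sup>2 \<partial>M)"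
  define e where "e = (\<integral>U. entry_cross a b c d U \<partial>M)"
  have "card {a, b} \<le> CARD('n)"
    by (rule card_mono) auto
  then have N2: "N \<ge> 2"
    using ab by (simp add: N_def)
  have norm: "N * g + N * (N - 1) * h = 1"
    using haar_moment_column_norm[OF haar ab, of c d] N2
    by (simp add: g_def h_def N_def field_simps)
  have mix: "e = g - h"
    using haar_moment_mixing[OF haar ab, of c d] by (simp add: g_def h_def e_def)
  have col: "if c = d then e = h else g + (N - 1) * e = 0"
  proof (cases "c = d")
    case True
    then show ?thesis
      unfolding e_def h_def by (simp add: Bochner_Integration.integral_cong[OF refl entry_cross_same_column])
  next
    case False
    then show ?thesis
      using haar_moment_orthogonality[OF haar ab False] by (simp add: g_def e_def N_def)
  qed
  show "g = 1 / N\<^sup>2 + (N - 1) * ((N * of_bool (c = d) - 1) / (N\<^sup>2 * (N\<^sup>2 - 1)))"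
    and "h = 1 / N\<^sup>2 - (N * of_bool (c = d) - 1) / (N\<^sup>2 * (N\<^sup>2 - 1))"
    using fourth_moment_equations_solution[OF N2 norm mix col] by simp_all
qed

lemma haar_fourth_moment:
  assumes "CARD('n) \<ge> 2"
  defines "N \<equiv> real CARD('n)"
  shows "(\<integral>U. (cmod (U $ a $ c))\<^sup>2 * (cmod (U $ b $ d))\<^sup>2 \<partial>M)
    = 1 / N\<^sup>2 + (N * of_bool (a = b) - 1) * (N * of_bool (c = d) - 1) / (N\<^sup>2 * (N\<^sup>2 - 1))"
proof (cases "a = b")
  case True
  have "\<not> (\<forall>x y :: 'n. x = y)"
    using assms(1) card_le_Suc0_iff_eq[of "UNIV :: 'n set"] by auto
  then obtain b' :: 'n where "b' \<noteq> a"
    by metis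
  then show ?thesis
    using haar_fourth_moments_two_rows(1)[of a b' c d] True by (simp add: N_def)
next
  case False
  then show ?thesis
    using haar_fourth_moments_two_rows(2)[OF False, of c d] by (simp add: N_def minus_divide_left)
qed

end

section \<open>Block statistics\<close>

lemma (in prob_space) covariance_eq_integral_mult_diff:
  assumes "integrable M X" "integrable M Y" "integrable M (\<lambda>x. X x * Y x)"
  shows "covariance M X Y = (\<integral>x. X x * Y x \<partial>M) - (\<integral>x. X x \<partial>M) * (\<integral>x. Y x \<partial>M)"
proof -
  have "covariance M X Y = (\<integral>x. X x * Y x - (\<integral>y. Y y \<partial>M) * X x - (\<integral>y. X y \<partial>M) * Y x
      + (\<integral>y. X y \<partial>M) * (\<integral>y. Y y \<partial>M) \<partial>M)"
    unfolding covariance_def by (simp add: algebra_simps)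
  also have "\<dots> = (\<integral>x. X x * Y x \<partial>M) - (\<integral>x. X x \<partial>M) * (\<integral>x. Y x \<partial>M)"
    using assms by (simp add: prob_space)
  finally show ?thesis .
qed

lemma card_le_card_prod: "CARD('a::finite) \<le> CARD('a \<times> 'b::finite)"
  using finite_UNIV_card_ge_0[where 'a='b] by simp

lemma pearson_eq_covariance_div_variance:
  assumes "variance M Y = variance M X" "variance M X \<ge> 0"
  shows "pearson M X Y = covariance M X Y / variance M X"
  using assms by (simp add: pearson_def)

lemma phi_block_mult:
  "phi_block U i j * phi_block U i' j' = (1 / real CARD('s))\<^sup>2 *
     (\<Sum>a\<in>UNIV. \<Sum>a'\<in>UNIV. \<Sum>b\<in>UNIV. \<Sum>b'\<in>UNIV.
        (cmod (U $ (i, a) $ (j, b)))\<^sup>2 * (cmod (U $ (i', a') $ (j', b')))\<^sup>2)"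
  for U :: "complex^('d::finite \<times> 's::finite)^('d \<times> 's)"
proof -
  have "phi_block U i j * phi_block U i' j' = (1 / real CARD('s))\<^sup>2 *
      ((\<Sum>a\<in>UNIV. \<Sum>b\<in>UNIV. (cmod (U $ (i, a) $ (j, b)))\<^sup>2)
        * (\<Sum>a'\<in>UNIV. \<Sum>b'\<in>UNIV. (cmod (U $ (i', a') $ (j', b')))\<^sup>2))"
    by (simp add: phi_block_def power2_eq_square[of "1 / _"])
  then show ?thesis
    by (simp only: sum_product)
qed

lemma sum_sum_block_indicator:
  fixes x :: real
  shows "(\<Sum>a\<in>(UNIV::'s::finite set). \<Sum>a'\<in>UNIV. x * of_bool ((i, a) = (i', a')) - 1)
    = real CARD('s) * (x * of_bool (i = i') - real CARD('s))"
  by (cases "i = i'") (simp_all add: sum_subtractf algebra_simps)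

lemma sum_pairs_const_add_product:
  fixes \<alpha> \<beta> :: "'a \<Rightarrow> 'a \<Rightarrow> real"
  assumes "finite A" "finite B"
  shows "(\<Sum>a\<in>A. \<Sum>a'\<in>A. \<Sum>b\<in>B. \<Sum>b'\<in>B. c + \<alpha> a a' * \<beta> b b' / D)
    = (real (card A))\<^sup>2 * (real (card B))\<^sup>2 * c + (\<Sum>a\<in>A. \<Sum>a'\<in>A. \<alpha> a a') * (\<Sum>b\<in>B. \<Sum>b'\<in>B. \<beta> b b') / D"
proof -
  have "(\<Sum>a\<in>A. \<Sum>a'\<in>A. \<alpha> a a') * (\<Sum>b\<in>B. \<Sum>b'\<in>B. \<beta> b b') / D
      = (\<Sum>a\<in>A. \<Sum>a'\<in>A. \<alpha> a a' * (\<Sum>b\<in>B. \<Sum>b'\<in>B. \<beta> b b') / D)"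
    by (simp add: sum_distrib_right sum_divide_distrib)
  also have "\<dots> = (\<Sum>a\<in>A. \<Sum>a'\<in>A. \<Sum>b\<in>B. \<Sum>b'\<in>B. \<alpha> a a' * \<beta> b b' / D)"
    by (simp add: sum_distrib_left sum_divide_distrib)
  finally show ?thesis
    by (simp add: sum.distrib power2_eq_square)
qed

lemma block_covariance_algebra:
  fixes d s n X Y :: real
  assumes "d > 0" "s > 0" "n = d * s" "n\<^sup>2 - 1 > 0"
  shows "(1 / s)\<^sup>2 * (s\<^sup>2 * s\<^sup>2 * (1 / n\<^sup>2) + s * (n * X - s) * (s * (n * Y - s)) / (n\<^sup>2 * (n\<^sup>2 - 1)))
    = 1 / d\<^sup>2 + (d * X - 1) * (d * Y - 1) / (d\<^sup>2 * (n\<^sup>2 - 1))"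
proof -
  define m where "m = n\<^sup>2 - 1"
  have "m > 0"
    using assms(4) by (simp add: m_def)
  then show ?thesis
    using assms(1,2) unfolding m_def[symmetric] unfolding assms(3)
    by (simp add: field_simps power2_eq_square)
qed

context
  fixes M :: "(complex^('d::finite \<times> 's::finite)^('d \<times> 's)) measure"
  assumes haar: "haar_unitary M"
begin

lemma haar_integrable_phi_block: "integrable M (\<lambda>U. phi_block U i j)"
  unfolding phi_block_def by (simp add: haar_integrable_sq_entry[OF haar])

lemma haar_integrable_phi_block_mult: "integrable M (\<lambda>U. phi_block U i j * phi_block U i' j')"
  unfolding phi_block_mult by (simp add: haar_integrable_sq_entry_mult[OF haar])

lemma haar_integral_phi_block: "(\<integral>U. phi_block U i j \<partial>M) = 1 / real CARD('d)"
  unfolding phi_block_def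
  by (simp add: haar_integrable_sq_entry[OF haar] haar_integral_sq_entry[OF haar] field_simps)

lemma haar_integral_phi_block_mult:
  assumes d2: "CARD('d) \<ge> 2"
  defines "d \<equiv> real CARD('d)" and "n \<equiv> real CARD('d \<times> 's)"
  shows "(\<integral>U. phi_block U i j * phi_block U i' j' \<partial>M)
    = 1 / d\<^sup>2 + (d * of_bool (i = i') - 1) * (d * of_bool (j = j') - 1) / (d\<^sup>2 * (n\<^sup>2 - 1))"
proof -
  define s where "s = real CARD('s)"
  have card2: "CARD('d \<times> 's) \<ge> 2"
    using d2 card_le_card_prod[where 'a='d and 'b='s] by linarith
  then have n2: "n \<ge> 2"
    by (simp add: n_def del: card_prod)
  have moment: "(\<integral>U. (cmod (U $ x $ z))\<^sup>2 * (cmod (U $ y $ w))\<^sup>2 \<partial>M)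
      = 1 / n\<^sup>2 + (n * of_bool (x = y) - 1) * (n * of_bool (z = w) - 1) / (n\<^sup>2 * (n\<^sup>2 - 1))" for x y z w
    unfolding n_def by (rule haar_fourth_moment[OF haar card2])
  have "(\<integral>U. phi_block U i j * phi_block U i' j' \<partial>M)
      = (1 / s)\<^sup>2 * (\<Sum>a\<in>UNIV. \<Sum>a'\<in>UNIV. \<Sum>b\<in>UNIV. \<Sum>b'\<in>UNIV.
          \<integral>U. (cmod (U $ (i, a) $ (j, b)))\<^sup>2 * (cmod (U $ (i', a') $ (j', b')))\<^sup>2 \<partial>M)"
    by (simp add: phi_block_mult s_def haar_integrable_sq_entry_mult[OF haar])
  also have "\<dots> = (1 / s)\<^sup>2 * (s\<^sup>2 * s\<^sup>2 * (1 / n\<^sup>2)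
      + (\<Sum>a\<in>UNIV. \<Sum>a'\<in>UNIV. n * of_bool ((i, a :: 's) = (i', a')) - 1)
        * (\<Sum>b\<in>UNIV. \<Sum>b'\<in>UNIV. n * of_bool ((j, b :: 's) = (j', b')) - 1) / (n\<^sup>2 * (n\<^sup>2 - 1)))"
    by (simp only: moment sum_pairs_const_add_product[OF finite finite] s_def)
  also have "\<dots> = (1 / s)\<^sup>2 * (s\<^sup>2 * s\<^sup>2 * (1 / n\<^sup>2)
      + s * (n * of_bool (i = i') - s) * (s * (n * of_bool (j = j') - s)) / (n\<^sup>2 * (n\<^sup>2 - 1)))"
    by (simp only: sum_sum_block_indicator s_def)
  also have "\<dots> = 1 / d\<^sup>2 + (d * of_bool (i = i') - 1) * (d * of_bool (j = j') - 1) / (d\<^sup>2 * (n\<^sup>2 - 1))"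
  proof (rule block_covariance_algebra)
    show "d > 0" "s > 0" "n = d * s"
      by (simp_all add: d_def s_def n_def)
    have "n\<^sup>2 \<ge> 2\<^sup>2"
      using n2 by (intro power_mono) auto
    then show "n\<^sup>2 - 1 > 0"
      by simp
  qed
  finally show ?thesis .
qed

lemma covariance_phi_block:
  assumes d2: "CARD('d) \<ge> 2"
  defines "d \<equiv> real CARD('d)" and "n \<equiv> real CARD('d \<times> 's)"
  shows "covariance M (\<lambda>U. phi_block U i j) (\<lambda>U. phi_block U i' j')
    = (d * of_bool (i = i') - 1) * (d * of_bool (j = j') - 1) / (d\<^sup>2 * (n\<^sup>2 - 1))"
  using prob_space.covariance_eq_integral_mult_diff[OF haar_prob_space[OF haar]
      haar_integrable_phi_block haar_integrable_phi_block haar_integrable_phi_block_mult]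
  by (simp add: haar_integral_phi_block haar_integral_phi_block_mult[OF d2] d_def n_def power2_eq_square)

end

theorem corollary5p5:
  fixes M :: "(complex ^('d::finite \<times> 's::finite) ^('d \<times> 's)) measure"
    and i i' j j' :: 'd
  defines "d \<equiv> real CARD('d)" and "n \<equiv> real CARD('d \<times> 's)"
  assumes d2: "CARD('d) \<ge> 2"
    and haar: "haar_unitary M"
    and ii: "i \<noteq> i'" and jj: "j \<noteq> j'"
  shows "(variance M (\<lambda>U. phi_block U i j) = (d - 1)\<^sup>2 / (d\<^sup>2 * (n\<^sup>2 - 1))) \<and>
    (covariance M (\<lambda>U. phi_block U i j) (\<lambda>U. phi_block U i' j) = - (d - 1) / (d\<^sup>2 * (n\<^sup>2 - 1))) \<and>
    (covariance M (\<lambda>U. phi_block U i j) (\<lambda>U. phi_block U i j') = - (d - 1) / (d\<^sup>2 * (n\<^sup>2 - 1))) \<and>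
    (pearson M (\<lambda>U. phi_block U i j) (\<lambda>U. phi_block U i' j) = - 1 / (d - 1)) \<and>
    (pearson M (\<lambda>U. phi_block U i j) (\<lambda>U. phi_block U i j') = - 1 / (d - 1)) \<and>
    (covariance M (\<lambda>U. phi_block U i j) (\<lambda>U. phi_block U i' j') = 1 / (d\<^sup>2 * (n\<^sup>2 - 1))) \<and>
    (pearson M (\<lambda>U. phi_block U i j) (\<lambda>U. phi_block U i' j') = 1 / (d - 1)\<^sup>2)"
proof -
  define D where "D = d\<^sup>2 * (n\<^sup>2 - 1)"
  have cov: "covariance M (\<lambda>U. phi_block U a b) (\<lambda>U. phi_block U a' b')
      = (d * of_bool (a = a') - 1) * (d * of_bool (b = b') - 1) / D" for a b a' b'
    unfolding D_def d_def n_def by (rule covariance_phi_block[OF haar d2])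
  have var: "variance M (\<lambda>U. phi_block U a b) = (d - 1)\<^sup>2 / D" for a b
    by (simp add: variance_def cov power2_eq_square)
  have "d \<ge> 2" "n \<ge> d"
    using d2 card_le_card_prod[where 'a='d and 'b='s] by (simp_all add: d_def n_def del: card_prod)
  then have d1: "d - 1 > 0" and "D > 0"
    using power_mono[of 2 n 2] by (auto simp: D_def)
  have pearson: "pearson M (\<lambda>U. phi_block U a b) (\<lambda>U. phi_block U a' b')
      = (d * of_bool (a = a') - 1) * (d * of_bool (b = b') - 1) / (d - 1)\<^sup>2" for a b a' b'
    using pearson_eq_covariance_div_variance[of M "\<lambda>U. phi_block U a' b'" "\<lambda>U. phi_block U a b"] \<open>D > 0\<close>
    by (simp add: var cov)
  have "- (d - 1) / (d - 1)\<^sup>2 = - 1 / (d - 1)"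
    using d1 by (simp add: divide_simps power2_eq_square)
  then show ?thesis
    using ii jj unfolding D_def[symmetric] by (simp add: cov var pearson)
qed

end
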